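(* Let $a_1,\dots,a_n$ and $b_1,\dots,b_n$ be complex numbers with all $a_i\ne0$, and let $a=\sum_{i=1}^n a_i$, $b=\sum_{i=1}^n b_i$. Suppose that for some reals $1>\tau>\epsilon>0$ we have $$\left|\frac{b_i}{a_i}-1\right|\le\epsilon\ \ (i=1,\dots,n)\qquad\text{and}\qquad |a|\ge\tau\sum_{i=1}^n|a_i|.$$ Then $a\ne0$, $b\ne0$, and the angle between $a$ and $b$ (as vectors in $\mathbb{R}^2\cong\mathbb{C}$) does not exceed $\arcsin\frac{\epsilon}{\tau}$. *)

theory Defs
  imports "HOL-Analysis.Analysis"
begin

definition vec_angle :: "'a::real_inner \<Rightarrow> 'a \<Rightarrow> real" where
  "vec_angle x y = arccos (inner x y / (norm x * norm y))"

end

theory Submission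
  imports Defs
begin

text \<open>Write \<open>A = \<Sum>a\<^sub>i\<close> and \<open>B = \<Sum>b\<^sub>i\<close>. Summing the termwise bounds
  \<open>|b\<^sub>i - a\<^sub>i| \<le> \<epsilon>|a\<^sub>i|\<close> and using \<open>|A| \<ge> \<tau> \<Sum>|a\<^sub>i|\<close> gives \<open>|B - A| \<le> (\<epsilon>/\<tau>)|A|\<close>,
  i.e. \<open>B\<close> lies in a disc around \<open>A\<close> of radius \<open>r|A|\<close> with \<open>r = \<epsilon>/\<tau> < 1\<close>.
  Such a disc misses the origin, and every point of it makes an angle of at
  most \<open>arcsin r\<close> with \<open>A\<close>; the latter is the inequality
  \<open>\<langle>A,B\<rangle>\<^sup>2 \<ge> (1 - r\<^sup>2)|A|\<^sup>2|B|\<^sup>2\<close>, valid in any real inner product space.\<close>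

lemma norm_sum_diff_le_sum_norm:
  fixes a b :: "'i \<Rightarrow> 'a::real_normed_vector"
  assumes "\<And>i. i \<in> I \<Longrightarrow> norm (b i - a i) \<le> \<epsilon> * norm (a i)"
  shows "norm (sum b I - sum a I) \<le> \<epsilon> * (\<Sum>i\<in>I. norm (a i))"
proof -
  have "norm (sum b I - sum a I) = norm (\<Sum>i\<in>I. b i - a i)"
    by (simp add: sum_subtractf)
  also have "\<dots> \<le> (\<Sum>i\<in>I. norm (b i - a i))"
    by (rule norm_sum)
  also have "\<dots> \<le> (\<Sum>i\<in>I. \<epsilon> * norm (a i))"
    using assms by (rule sum_mono)
  finally show ?thesis
    by (simp add: sum_distrib_left)
qed

lemma norm_ge_if_close:
  fixes A B :: "'a::real_normed_vector"
  assumes "norm (B - A) \<le> r * norm A"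
  shows "(1 - r) * norm A \<le> norm B"
  using assms norm_triangle_ineq2[of A B] by (simp add: algebra_simps norm_minus_commute)

lemma inner_nonneg_if_close:
  fixes A B :: "'a::real_inner"
  assumes "norm (B - A) \<le> r * norm A" and "r \<le> 1"
  shows "0 \<le> inner A B"
proof -
  have "inner A B = (norm A)\<^sup>2 + inner A (B - A)"
    by (simp add: inner_diff_right power2_norm_eq_inner)
  moreover have "- inner A (B - A) \<le> norm A * (r * norm A)"
    using Cauchy_Schwarz_ineq2[of A "B - A"] mult_left_mono[OF assms(1) norm_ge_zero[of A]]
    by linarith
  moreover have "norm A * (r * norm A) \<le> norm A * norm A"
    using mult_right_mono[OF assms(2) norm_ge_zero[of A]] by (intro mult_left_mono) simp_all
  ultimately show ?thesis
    by (simp add: power2_eq_square)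
qed

lemma inner_square_ge_if_close:
  fixes A B :: "'a::real_inner"
  assumes "norm (B - A) \<le> r * norm A" and "0 \<le> r"
  shows "(1 - r\<^sup>2) * ((norm A)\<^sup>2 * (norm B)\<^sup>2) \<le> (inner A B)\<^sup>2"
proof -
  define s p q where "s = (norm A)\<^sup>2" and "p = inner A (B - A)" and "q = (norm (B - A))\<^sup>2"
  have normB: "(norm B)\<^sup>2 = s + 2 * p + q" and innerAB: "inner A B = s + p"
    unfolding s_def p_def q_def power2_norm_eq_inner
    by (simp_all add: inner_diff_left inner_diff_right inner_commute)
  have "q \<le> r\<^sup>2 * s"
    using power_mono[OF assms(1) norm_ge_zero] by (simp add: s_def q_def power_mult_distrib)
  from mult_right_mono[OF this zero_le_power2[of "norm B"]]
  have "q * (s + 2 * p + q) \<le> r\<^sup>2 * s * (s + 2 * p + q)"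
    by (simp add: normB)
  \<comment> \<open>the Gram determinant \<open>s(s + 2p + q) - (s + p)\<^sup>2 = sq - p\<^sup>2\<close> is at most \<open>q(s + 2p + q)\<close>\<close>
  moreover have "s * q - p\<^sup>2 \<le> q * (s + 2 * p + q)"
    using zero_le_power2[of "p + q"] by (simp add: power2_eq_square algebra_simps)
  ultimately have "(1 - r\<^sup>2) * (s * (s + 2 * p + q)) \<le> (s + p)\<^sup>2"
    by (simp add: power2_eq_square algebra_simps)
  then show ?thesis
    by (simp only: normB innerAB s_def)
qed

lemma vec_angle_le_arcsin_if_close:
  fixes A B :: "'a::real_inner"
  assumes "A \<noteq> 0" and "0 \<le> r" and "r < 1" and close: "norm (B - A) \<le> r * norm A"
  shows "B \<noteq> 0 \<and> vec_angle A B \<le> arcsin r"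
proof -
  have "0 < (1 - r) * norm A"
    using assms by simp
  with norm_ge_if_close[OF close] have normB: "0 < norm B"
    by linarith
  have r2: "0 \<le> 1 - r\<^sup>2"
    using assms by (simp add: power_le_one)
  have "(sqrt (1 - r\<^sup>2) * (norm A * norm B))\<^sup>2 \<le> (inner A B)\<^sup>2"
    using inner_square_ge_if_close[OF close \<open>0 \<le> r\<close>] r2 by (simp add: power_mult_distrib)
  then have "sqrt (1 - r\<^sup>2) * (norm A * norm B) \<le> inner A B"
    using inner_nonneg_if_close[OF close] \<open>r < 1\<close> by (elim power2_le_imp_le) simp
  then have lower: "sqrt (1 - r\<^sup>2) \<le> inner A B / (norm A * norm B)"
    using \<open>A \<noteq> 0\<close> normB by (simp add: field_simps)
  have upper: "inner A B / (norm A * norm B) \<le> 1"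
    using Cauchy_Schwarz_ineq2[of A B] \<open>A \<noteq> 0\<close> normB by simp
  have "-1 \<le> sqrt (1 - r\<^sup>2)"
    using real_sqrt_ge_zero[OF r2] by linarith
  from arccos_le_arccos[OF this lower upper]
  have "vec_angle A B \<le> arccos (sqrt (1 - r\<^sup>2))"
    unfolding vec_angle_def .
  also have "\<dots> = arcsin r"
    using arcsin_arccos_sqrt_pos[of r] assms by simp
  finally show ?thesis
    using normB by simp
qed

theorem lemma4p2:
  fixes a b :: "nat \<Rightarrow> complex" and n :: nat and \<epsilon> \<tau> :: real
  assumes "n \<ge> 1"
    and "\<And>i. i \<in> {1..n} \<Longrightarrow> a i \<noteq> 0"
    and "0 < \<epsilon>" and "\<epsilon> < \<tau>" and "\<tau> < 1"
    and "\<And>i. i \<in> {1..n} \<Longrightarrow> cmod (b i / a i - 1) \<le> \<epsilon>"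
    and "cmod (\<Sum>i=1..n. a i) \<ge> \<tau> * (\<Sum>i=1..n. cmod (a i))"
  shows "(\<Sum>i=1..n. a i) \<noteq> 0 \<and> (\<Sum>i=1..n. b i) \<noteq> 0 \<and>
         vec_angle (\<Sum>i=1..n. a i) (\<Sum>i=1..n. b i) \<le> arcsin (\<epsilon> / \<tau>)"
proof -
  have "0 < cmod (a 1)"
    using assms(1,2) by simp
  also have "\<dots> \<le> (\<Sum>i=1..n. cmod (a i))"
    using assms(1) by (intro member_le_sum) auto
  finally have "0 < \<tau> * (\<Sum>i=1..n. cmod (a i))"
    using assms(3,4) by simp
  with assms(7) have sum_a: "(\<Sum>i=1..n. a i) \<noteq> 0"
    by auto
  have "cmod (b i - a i) \<le> \<epsilon> * cmod (a i)" if "i \<in> {1..n}" for i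
  proof -
    have "b i - a i = (b i / a i - 1) * a i"
      using assms(2)[OF that] by (simp add: field_simps)
    then have "cmod (b i - a i) = cmod (b i / a i - 1) * cmod (a i)"
      by (simp add: norm_mult)
    then show ?thesis
      using assms(6)[OF that] by (simp add: mult_right_mono)
  qed
  then have "cmod ((\<Sum>i=1..n. b i) - (\<Sum>i=1..n. a i)) \<le> \<epsilon> * (\<Sum>i=1..n. cmod (a i))"
    by (rule norm_sum_diff_le_sum_norm)
  also have "\<dots> \<le> \<epsilon> / \<tau> * cmod (\<Sum>i=1..n. a i)"
    using assms(3,4,7) by (simp add: field_simps)
  finally have "cmod ((\<Sum>i=1..n. b i) - (\<Sum>i=1..n. a i)) \<le> \<epsilon> / \<tau> * cmod (\<Sum>i=1..n. a i)" .
  moreover have "0 \<le> \<epsilon> / \<tau>" and "\<epsilon> / \<tau> < 1"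
    using assms(3,4) by simp_all
  ultimately show ?thesis
    using vec_angle_le_arcsin_if_close[OF sum_a] sum_a by blast
qed

end
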